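(* Let $A\in\mathbb{R}^{n_x\times n_x}$, $B\in\mathbb{R}^{n_x\times n_u}$, $K\in\mathbb{R}^{n_u\times n_x}$, $F\in\mathbb{R}^{m_w\times n_x}$, $d\in\mathbb{R}^{m_w}$ with $d\ge0$, $\underline{P}\in\mathbb{R}^{\underline{m}\times n_x}$, $\underline{b}\in\mathbb{R}^{\underline m}$ with $\underline b\ge 0$, $\bar P\in\mathbb{R}^{\bar m\times n_x}$, $\bar b\in\mathbb{R}^{\bar m}$ with $\bar b\ge0$. (a) If for every $i\in\{1,\dots,\underline m\}$ there exist $\underline D_{[i]}\in\mathbb{D}_+^{\underline m}$ and $W_{[i]}\in\mathbb{D}_+^{m_w}$ with $$\begin{bmatrix}2\underline b_i-\underline b^\top\underline D_{[i]}\underline b-d^\top W_{[i]}d & \underline P_i & \underline P_i(A+BK)\\ * & F^\top W_{[i]}F & \mathbf 0\\ * & * & \underline P^\top\underline D_{[i]}\underline P\end{bmatrix}\succ0,$$ then $(A+BK)\mathcal{P}(\underline P,\underline b)\oplus\mathcal{P}(F,d)\subseteq\mathcal{P}(\underline P,\underline b)$. (b) If for every $i\in\{1,\dots,\bar m\}$ there exists $\bar D_{[i]}\in\mathbb{D}_+^{\bar m}$ with $$\begin{bmatrix}2\bar b_i-\bar b^\top\bar D_{[i]}\bar b & \bar P_i(A+BK)\\ * & \bar P^\top\bar D_{[i]}\bar P\end{bmatrix}\succ0,$$ then $(A+BK)\mathcal{P}(\bar P,\bar b)\subseteq\mathcal{P}(\bar P,\bar b)$.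
   Context: For $M\in\mathbb{R}^{m\times n}$ and $b\in\mathbb{R}^m$, $\mathcal{P}(M,b):=\{x\in\mathbb{R}^n:-b\le Mx\le b\}$ (componentwise). $M_i$ denotes the $i$-th row of $M$, $b_i$ the $i$-th entry of $b$. $\mathbb{D}_+^m$ is the set of $m\times m$ diagonal matrices with positive diagonal entries. $\succ0$ means symmetric positive definite, and $*$ denotes blocks determined by symmetry. $\oplus$ is Minkowski sum, and $C\mathcal{S}:=\{Cx:x\in\mathcal{S}\}$. *)

theory Defs
  imports "HOL-Analysis.Analysis"
begin

definition sympoly :: "real^'n^'m \<Rightarrow> real^'m \<Rightarrow> (real^'n) set" where
  "sympoly M b = {x. \<forall>i. - (b $ i) \<le> (M *v x) $ i \<and> (M *v x) $ i \<le> b $ i}"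

definition diag_pos :: "(real^'m^'m) set" where
  "diag_pos = {D. (\<forall>i j. i \<noteq> j \<longrightarrow> D $ i $ j = 0) \<and> (\<forall>i. D $ i $ i > 0)}"

definition pos_def :: "real^'n^'n \<Rightarrow> bool" where
  "pos_def M \<longleftrightarrow> transpose M = M \<and> (\<forall>x. x \<noteq> 0 \<longrightarrow> x \<bullet> (M *v x) > 0)"

text \<open>Symmetric 3x3 block matrix [a11 a12 a13; * a22 a23; * * a33], with a scalar
  first block; indices: Inl () first block, Inr (Inl i) second, Inr (Inr j) third.\<close>
definition block3 :: "real \<Rightarrow> real^'n \<Rightarrow> real^'k \<Rightarrow> real^'n^'n \<Rightarrow> real^'k^'n \<Rightarrow> real^'k^'k
    \<Rightarrow> real^(unit + 'n + 'k)^(unit + 'n + 'k)" where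
  "block3 a11 a12 a13 a22 a23 a33 = (\<chi> r c.
     (case r of
        Inl _ \<Rightarrow> (case c of Inl _ \<Rightarrow> a11 | Inr (Inl j) \<Rightarrow> a12 $ j | Inr (Inr j) \<Rightarrow> a13 $ j)
      | Inr (Inl i) \<Rightarrow> (case c of Inl _ \<Rightarrow> a12 $ i | Inr (Inl j) \<Rightarrow> a22 $ i $ j
                                | Inr (Inr j) \<Rightarrow> a23 $ i $ j)
      | Inr (Inr i) \<Rightarrow> (case c of Inl _ \<Rightarrow> a13 $ i | Inr (Inl j) \<Rightarrow> a23 $ j $ i
                                | Inr (Inr j) \<Rightarrow> a33 $ i $ j)))"

definition block2 :: "real \<Rightarrow> real^'n \<Rightarrow> real^'n^'n \<Rightarrow> real^(unit + 'n)^(unit + 'n)" where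
  "block2 a11 a12 a22 = (\<chi> r c.
     (case r of
        Inl _ \<Rightarrow> (case c of Inl _ \<Rightarrow> a11 | Inr j \<Rightarrow> a12 $ j)
      | Inr i \<Rightarrow> (case c of Inl _ \<Rightarrow> a12 $ i | Inr j \<Rightarrow> a22 $ i $ j)))"

end

theory Submission imports Defs begin

text \<open>For \<open>x\<close> in \<open>\<P>(P,b)\<close> and diagonal \<open>D > 0\<close> we have
  \<open>x\<^sup>T P\<^sup>T D P x = \<Sum>\<^sub>j D\<^sub>j\<^sub>j (P x)\<^sub>j\<^sup>2 \<le> b\<^sup>T D b\<close> (an S-procedure bound).
  Evaluating the quadratic form of the LMI of row \<open>i\<close> at \<open>(1, -w, -x)\<close> and bounding its
  two quadratic terms in this way leaves \<open>2 b\<^sub>i - 2 P\<^sub>i ((A + B K) x + w) > 0\<close>; the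
  point \<open>(1, w, x)\<close> gives the lower bound likewise. Part (b) is the same argument without \<open>w\<close>.\<close>

lemma matrix_vector_mult_uminus: "(P :: real^'n^'m) *v (- x) = - (P *v x)"
  by (rule linear_neg[OF matrix_vector_mul_linear])

lemma sympoly_iff_abs_le: "x \<in> sympoly P b \<longleftrightarrow> (\<forall>i. \<bar>(P *v x) $ i\<bar> \<le> b $ i)"
  unfolding sympoly_def abs_le_iff by (auto simp: minus_le_iff)

lemma sympoly_uminus: "x \<in> sympoly P b \<Longrightarrow> - x \<in> sympoly P b"
  by (simp add: sympoly_iff_abs_le matrix_vector_mult_uminus)

lemma inner_vector_matrix_row: "((P $ i) v* M) \<bullet> x = (P *v (M *v x)) $ i"
  by (simp add: dot_lmul_matrix matrix_vector_mul_component)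

lemma inner_congruence_transform:
  fixes P :: "real^'n^'m" and C :: "real^'m^'m"
  shows "x \<bullet> ((transpose P ** C ** P) *v x) = (P *v x) \<bullet> (C *v (P *v x))"
proof -
  have "x \<bullet> ((transpose P ** C ** P) *v x) = (x v* transpose P) \<bullet> (C *v (P *v x))"
    by (simp only: matrix_vector_mul_assoc matrix_mul_assoc dot_lmul_matrix)
  then show ?thesis by (simp only: vector_transpose_matrix)
qed

lemma diag_pos_mult_vector: "D \<in> diag_pos \<Longrightarrow> (D *v v) $ j = D $ j $ j * v $ j"
  unfolding diag_pos_def matrix_vector_mult_def
  by (simp, subst sum.remove[of UNIV j]) auto

lemma diag_pos_quadratic_form:
  "D \<in> diag_pos \<Longrightarrow> v \<bullet> (D *v v) = (\<Sum>j\<in>UNIV. D $ j $ j * (v $ j)\<^sup>2)"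
  by (simp add: inner_vec_def diag_pos_mult_vector power2_eq_square algebra_simps)

lemma sympoly_quadratic_form_le:
  assumes D: "D \<in> diag_pos" and x: "x \<in> sympoly P b"
  shows "x \<bullet> ((transpose P ** D ** P) *v x) \<le> b \<bullet> (D *v b)"
proof -
  have "x \<bullet> ((transpose P ** D ** P) *v x) = (\<Sum>j\<in>UNIV. D $ j $ j * ((P *v x) $ j)\<^sup>2)"
    by (simp add: inner_congruence_transform diag_pos_quadratic_form[OF D])
  also have "\<dots> \<le> (\<Sum>j\<in>UNIV. D $ j $ j * (b $ j)\<^sup>2)"
  proof (rule sum_mono)
    fix j
    have "\<bar>(P *v x) $ j\<bar> \<le> b $ j"
      using x by (simp add: sympoly_iff_abs_le)
    then have "((P *v x) $ j)\<^sup>2 \<le> (b $ j)\<^sup>2"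
      by (metis abs_ge_zero power2_abs power_mono)
    moreover have "D $ j $ j > 0" using D by (simp add: diag_pos_def)
    ultimately show "D $ j $ j * ((P *v x) $ j)\<^sup>2 \<le> D $ j $ j * (b $ j)\<^sup>2" by simp
  qed
  also have "\<dots> = b \<bullet> (D *v b)"
    by (simp add: diag_pos_quadratic_form[OF D])
  finally show ?thesis .
qed

lemma sum_UNIV_Plus:
  "sum g (UNIV :: ('a::finite + 'b::finite) set) = (\<Sum>a\<in>UNIV. g (Inl a)) + (\<Sum>b\<in>UNIV. g (Inr b))"
  by (subst UNIV_Plus_UNIV[symmetric], subst sum.Plus) (auto simp: comp_def)

lemma pos_def_block2_affine:
  fixes a12 y :: "real^'n"
  assumes "pos_def (block2 a11 a12 a22)"
  shows "0 < a11 + 2 * (a12 \<bullet> y) + y \<bullet> (a22 *v y)"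
proof -
  define z :: "real^(unit + 'n)" where "z = (\<chi> r. case r of Inl _ \<Rightarrow> 1 | Inr j \<Rightarrow> y $ j)"
  have "z $ Inl () = 1" by (simp add: z_def)
  then have "z \<noteq> 0" by (metis zero_index zero_neq_one)
  then have "0 < z \<bullet> (block2 a11 a12 a22 *v z)"
    using assms unfolding pos_def_def by blast
  also have "\<dots> = a11 + 2 * (a12 \<bullet> y) + y \<bullet> (a22 *v y)"
    unfolding z_def block2_def
    by (simp add: sum_UNIV_Plus inner_vec_def matrix_vector_mult_def
        sum_distrib_left sum.distrib algebra_simps)
  finally show ?thesis .
qed

lemma pos_def_block3_affine:
  fixes a12 y :: "real^'n" and a13 u :: "real^'k"
  assumes "pos_def (block3 a11 a12 a13 a22 0 a33)"
  shows "0 < a11 + 2 * (a12 \<bullet> y) + 2 * (a13 \<bullet> u) + y \<bullet> (a22 *v y) + u \<bullet> (a33 *v u)"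
proof -
  define z :: "real^(unit + 'n + 'k)"
    where "z = (\<chi> r. case r of Inl _ \<Rightarrow> 1 | Inr (Inl j) \<Rightarrow> y $ j | Inr (Inr j) \<Rightarrow> u $ j)"
  have "z $ Inl () = 1" by (simp add: z_def)
  then have "z \<noteq> 0" by (metis zero_index zero_neq_one)
  then have "0 < z \<bullet> (block3 a11 a12 a13 a22 0 a33 *v z)"
    using assms unfolding pos_def_def by blast
  also have "\<dots> = a11 + 2 * (a12 \<bullet> y) + 2 * (a13 \<bullet> u) + y \<bullet> (a22 *v y) + u \<bullet> (a33 *v u)"
    unfolding z_def block3_def
    by (simp add: sum_UNIV_Plus inner_vec_def matrix_vector_mult_def
        sum_distrib_left sum.distrib algebra_simps)
  finally show ?thesis .
qed

lemma sympoly_image_subset: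
  fixes M :: "real^'n^'n" and P :: "real^'n^'m" and b :: "real^'m"
  assumes lmi: "\<forall>i. \<exists>D \<in> diag_pos.
      pos_def (block2 (2 * b $ i - b \<bullet> (D *v b)) ((P $ i) v* M) (transpose P ** D ** P))"
  shows "(\<lambda>x. M *v x) ` sympoly P b \<subseteq> sympoly P b"
proof -
  have upper: "(P *v (M *v x)) $ i < b $ i" if x: "x \<in> sympoly P b" for x i
  proof -
    obtain D where D: "D \<in> diag_pos" and
      pd: "pos_def (block2 (2 * b $ i - b \<bullet> (D *v b)) ((P $ i) v* M) (transpose P ** D ** P))"
      using lmi by blast
    show ?thesis
      using pos_def_block2_affine[OF pd, of "- x"]
        sympoly_quadratic_form_le[OF D sympoly_uminus[OF x]]
      by (simp add: inner_vector_matrix_row)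
  qed
  have "\<bar>(P *v (M *v x)) $ i\<bar> \<le> b $ i" if "x \<in> sympoly P b" for x i
    using upper[OF that] upper[OF sympoly_uminus[OF that]]
    by (simp add: matrix_vector_mult_uminus abs_le_iff less_imp_le)
  then show ?thesis by (auto simp: sympoly_iff_abs_le)
qed

lemma sympoly_image_plus_subset:
  fixes M :: "real^'n^'n" and P :: "real^'n^'m" and b :: "real^'m"
    and F :: "real^'n^'k" and d :: "real^'k"
  assumes lmi: "\<forall>i. \<exists>D \<in> diag_pos. \<exists>W \<in> diag_pos.
      pos_def (block3 (2 * b $ i - b \<bullet> (D *v b) - d \<bullet> (W *v d)) (P $ i) ((P $ i) v* M)
                      (transpose F ** W ** F) 0 (transpose P ** D ** P))"
  shows "{y + w | y w. y \<in> (\<lambda>x. M *v x) ` sympoly P b \<and> w \<in> sympoly F d} \<subseteq> sympoly P b"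
proof -
  have upper: "(P *v (M *v x + w)) $ i < b $ i"
    if x: "x \<in> sympoly P b" and w: "w \<in> sympoly F d" for x w i
  proof -
    obtain D W where D: "D \<in> diag_pos" and W: "W \<in> diag_pos" and
      pd: "pos_def (block3 (2 * b $ i - b \<bullet> (D *v b) - d \<bullet> (W *v d)) (P $ i) ((P $ i) v* M)
                           (transpose F ** W ** F) 0 (transpose P ** D ** P))"
      using lmi by blast
    have "(P $ i) \<bullet> (- w) = - (P *v w) $ i" "((P $ i) v* M) \<bullet> (- x) = - (P *v (M *v x)) $ i"
      by (simp_all add: matrix_vector_mul_component inner_vector_matrix_row matrix_vector_mult_uminus)
    moreover have "(P *v (M *v x + w)) $ i = (P *v (M *v x)) $ i + (P *v w) $ i"
      by (simp add: matrix_vector_right_distrib)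
    ultimately show ?thesis
      using pos_def_block3_affine[OF pd, of "- w" "- x"]
        sympoly_quadratic_form_le[OF D sympoly_uminus[OF x]]
        sympoly_quadratic_form_le[OF W sympoly_uminus[OF w]]
      by linarith
  qed
  have "\<bar>(P *v (M *v x + w)) $ i\<bar> \<le> b $ i"
    if "x \<in> sympoly P b" "w \<in> sympoly F d" for x w i
  proof -
    have "(P *v (M *v (- x) + - w)) $ i = - (P *v (M *v x + w)) $ i"
      by (simp add: matrix_vector_mult_uminus matrix_vector_mult_diff_distrib matrix_vector_right_distrib)
    then show ?thesis
      using upper[OF that, of i] upper[OF sympoly_uminus sympoly_uminus, OF that, of i]
      by linarith
  qed
  then show ?thesis by (auto simp: sympoly_iff_abs_le)
qed

theorem mainTheorem3:
  fixes A :: "real^'nx^'nx" and B :: "real^'nu^'nx" and K :: "real^'nx^'nu"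
    and F :: "real^'nx^'mw" and d :: "real^'mw"
    and Pl :: "real^'nx^'ml" and bl :: "real^'ml"
    and Pu :: "real^'nx^'mu" and bu :: "real^'mu"
  assumes d_nonneg: "\<forall>i. d $ i \<ge> 0"
    and bl_nonneg: "\<forall>i. bl $ i \<ge> 0"
    and bu_nonneg: "\<forall>i. bu $ i \<ge> 0"
  shows
   "((\<forall>i. \<exists>D \<in> diag_pos. \<exists>W \<in> diag_pos.
        pos_def (block3 (2 * bl $ i - bl \<bullet> (D *v bl) - d \<bullet> (W *v d))
                        (Pl $ i) ((Pl $ i) v* (A + B ** K))
                        (transpose F ** W ** F) 0
                        (transpose Pl ** D ** Pl)))
     \<longrightarrow> {y + w | y w. y \<in> (\<lambda>x. (A + B ** K) *v x) ` sympoly Pl bl \<and> w \<in> sympoly F d}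
           \<subseteq> sympoly Pl bl)
    \<and>
    ((\<forall>i. \<exists>D \<in> diag_pos.
        pos_def (block2 (2 * bu $ i - bu \<bullet> (D *v bu))
                        ((Pu $ i) v* (A + B ** K))
                        (transpose Pu ** D ** Pu)))
     \<longrightarrow> (\<lambda>x. (A + B ** K) *v x) ` sympoly Pu bu \<subseteq> sympoly Pu bu)"
  using sympoly_image_plus_subset[where M = "A + B ** K" and P = Pl and b = bl and F = F and d = d]
    sympoly_image_subset[where M = "A + B ** K" and P = Pu and b = bu]
  by blast

end
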